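(* Let $G=(V,E)$ be a finite multigraph with a two-edge-connected subgraph $H=(W,F)$. If a partition $\pi$ of $V$ is such that $G^\pi$ is a cactus, then the sub-quotient $H^{\pi|_W}$ is also a cactus. Similarly, if $G$ is a directed multigraph and $G^\pi$ is an oriented cactus, then $H^{\pi|_W}$ is also an oriented cactus.
   Context: $G^\pi$ identifies the vertices in each block of $\pi$; $\pi|_W$ is the restriction of $\pi$ to $W$. A cactus is a connected multigraph in which every edge belongs to exactly one simple cycle (loops and pairs of parallel edges count as cycles); its cycles are its pads. An oriented cactus is a directed multigraph whose underlying multigraph is a cactus and whose pads are directed cycles. Two-edge-connected: connected with no cut-edge. *)

theory Defs
  imports Main "HOL-Library.Disjoint_Sets"
begin

text \<open>For undirected multigraphs the orientation
  (src, tgt) of an edge is ignored.  Loops (src e = tgt e) and parallel edges are allowed.\<close>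

definition multigraph :: "'v set \<Rightarrow> 'e set \<Rightarrow> ('e \<Rightarrow> 'v) \<Rightarrow> ('e \<Rightarrow> 'v) \<Rightarrow> bool" where
  "multigraph V E src tgt \<longleftrightarrow> finite V \<and> finite E \<and> (\<forall>e\<in>E. src e \<in> V \<and> tgt e \<in> V)"

definition subgraph :: "'v set \<Rightarrow> 'e set \<Rightarrow> 'v set \<Rightarrow> 'e set \<Rightarrow> ('e \<Rightarrow> 'v) \<Rightarrow> ('e \<Rightarrow> 'v) \<Rightarrow> bool" where
  "subgraph W F V E src tgt \<longleftrightarrow> W \<subseteq> V \<and> F \<subseteq> E \<and> (\<forall>e\<in>F. src e \<in> W \<and> tgt e \<in> W)"

definition adj :: "'e set \<Rightarrow> ('e \<Rightarrow> 'v) \<Rightarrow> ('e \<Rightarrow> 'v) \<Rightarrow> ('v \<times> 'v) set" where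
  "adj E src tgt = {(src e, tgt e) | e. e \<in> E} \<union> {(tgt e, src e) | e. e \<in> E}"

definition connected_mg :: "'v set \<Rightarrow> 'e set \<Rightarrow> ('e \<Rightarrow> 'v) \<Rightarrow> ('e \<Rightarrow> 'v) \<Rightarrow> bool" where
  "connected_mg V E src tgt \<longleftrightarrow> V \<noteq> {} \<and> (\<forall>u\<in>V. \<forall>v\<in>V. (u, v) \<in> (adj E src tgt)\<^sup>*)"

definition cut_edge :: "'e set \<Rightarrow> ('e \<Rightarrow> 'v) \<Rightarrow> ('e \<Rightarrow> 'v) \<Rightarrow> 'e \<Rightarrow> bool" where
  "cut_edge E src tgt e \<longleftrightarrow> e \<in> E \<and> (src e, tgt e) \<notin> (adj (E - {e}) src tgt)\<^sup>*"

definition two_edge_connected :: "'v set \<Rightarrow> 'e set \<Rightarrow> ('e \<Rightarrow> 'v) \<Rightarrow> ('e \<Rightarrow> 'v) \<Rightarrow> bool" where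
  "two_edge_connected V E src tgt \<longleftrightarrow>
     connected_mg V E src tgt \<and> (\<forall>e\<in>E. \<not> cut_edge E src tgt e)"

text \<open>Loops (k = 1) and pairs of parallel edges
  (k = 2) are cycles.\<close>
definition simple_cycle :: "'e set \<Rightarrow> ('e \<Rightarrow> 'v) \<Rightarrow> ('e \<Rightarrow> 'v) \<Rightarrow> 'e set \<Rightarrow> bool" where
  "simple_cycle E src tgt C \<longleftrightarrow>
     (\<exists>vs es. es \<noteq> [] \<and> length vs = length es \<and> distinct vs \<and> distinct es \<and>
        set es \<subseteq> E \<and> set es = C \<and>
        (\<forall>i < length es. {src (es!i), tgt (es!i)} = {vs!i, vs!((i+1) mod length es)}))"

definition directed_cycle :: "'e set \<Rightarrow> ('e \<Rightarrow> 'v) \<Rightarrow> ('e \<Rightarrow> 'v) \<Rightarrow> 'e set \<Rightarrow> bool" where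
  "directed_cycle E src tgt C \<longleftrightarrow>
     (\<exists>vs es. es \<noteq> [] \<and> length vs = length es \<and> distinct vs \<and> distinct es \<and>
        set es \<subseteq> E \<and> set es = C \<and>
        (\<forall>i < length es. src (es!i) = vs!i \<and> tgt (es!i) = vs!((i+1) mod length es)))"

definition cactus :: "'v set \<Rightarrow> 'e set \<Rightarrow> ('e \<Rightarrow> 'v) \<Rightarrow> ('e \<Rightarrow> 'v) \<Rightarrow> bool" where
  "cactus V E src tgt \<longleftrightarrow> connected_mg V E src tgt \<and>
     (\<forall>e\<in>E. \<exists>!C. simple_cycle E src tgt C \<and> e \<in> C)"

definition oriented_cactus :: "'v set \<Rightarrow> 'e set \<Rightarrow> ('e \<Rightarrow> 'v) \<Rightarrow> ('e \<Rightarrow> 'v) \<Rightarrow> bool" where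
  "oriented_cactus V E src tgt \<longleftrightarrow> cactus V E src tgt \<and>
     (\<forall>C. simple_cycle E src tgt C \<longrightarrow> directed_cycle E src tgt C)"

text \<open>Quotient by a partition: the block containing v; G^\<pi> has vertex set \<pi>, the same edges,
  and each endpoint replaced by its block.\<close>
definition blk :: "'v set set \<Rightarrow> 'v \<Rightarrow> 'v set" where
  "blk P v = (THE B. B \<in> P \<and> v \<in> B)"

definition restrict_partition :: "'v set set \<Rightarrow> 'v set \<Rightarrow> 'v set set" where
  "restrict_partition P W = {B \<inter> W | B. B \<in> P \<and> B \<inter> W \<noteq> {}}"

end

theory Submission
  imports Defs
begin

text \<open>On W the quotient maps of \<pi> and of \<pi>|W have the same fibres, so the vertex map
  H^(\<pi>|W) \<rightarrow> G^\<pi> is injective. Hence every simple cycle of H^(\<pi>|W) is a simple cycle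
  of G^\<pi>, and a directed cycle of G^\<pi> whose edges lie in H pulls back to a directed cycle
  of H^(\<pi>|W). Quotients preserve connectivity and cannot create cut-edges, so every edge of
  H^(\<pi>|W) lies on some simple cycle; its uniqueness is inherited from G^\<pi>.\<close>

section \<open>Blocks of a partition\<close>

lemma blk_eqI:
  assumes "partition_on A P" "B \<in> P" "v \<in> B"
  shows "blk P v = B"
  unfolding blk_def
proof (rule the_equality)
  show "B \<in> P \<and> v \<in> B" using assms by auto
next
  fix B' assume "B' \<in> P \<and> v \<in> B'"
  then show "B' = B" using assms partition_onD2[OF assms(1)]
    by (meson disjointD disjoint_iff)
qed

lemma blk_in_partition:
  assumes "partition_on A P" "v \<in> A"
  shows "blk P v \<in> P" and "v \<in> blk P v"
proof -
  obtain B where "B \<in> P" "v \<in> B" using assms partition_onD1[OF assms(1)] by blast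
  then show "blk P v \<in> P" "v \<in> blk P v" using blk_eqI[OF assms(1)] by auto
qed

lemma blk_image:
  assumes "partition_on A P"
  shows "blk P ` A = P"
proof
  show "blk P ` A \<subseteq> P" using blk_in_partition[OF assms] by blast
next
  show "P \<subseteq> blk P ` A"
  proof
    fix B assume "B \<in> P"
    then obtain v where "v \<in> B" using partition_onD3[OF assms] by fastforce
    then show "B \<in> blk P ` A"
      using blk_eqI[OF assms \<open>B \<in> P\<close>] partition_onD1[OF assms] \<open>B \<in> P\<close> by blast
  qed
qed

lemma partition_on_restrict_partition:
  assumes "partition_on A P" "W \<subseteq> A"
  shows "partition_on W (restrict_partition P W)"
proof -
  have "restrict_partition P W = (\<inter>) W ` P - {{}}"
    unfolding restrict_partition_def by blast
  moreover have "W \<inter> A = W" using assms(2) by blast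
  ultimately show ?thesis using partition_on_restrict[OF assms(1), of W] by simp
qed

lemma blk_restrict_partition:
  assumes "partition_on A P" "W \<subseteq> A" "w \<in> W"
  shows "blk (restrict_partition P W) w = blk P w \<inter> W"
proof (rule blk_eqI[OF partition_on_restrict_partition[OF assms(1,2)]])
  show "blk P w \<inter> W \<in> restrict_partition P W" "w \<in> blk P w \<inter> W"
    using blk_in_partition[OF assms(1)] assms(2,3)
    unfolding restrict_partition_def by blast+
qed

lemma blk_restrict_partition_eq_iff:
  assumes "partition_on A P" "W \<subseteq> A" "u \<in> W" "v \<in> W"
  shows "blk (restrict_partition P W) u = blk (restrict_partition P W) v \<longleftrightarrow> blk P u = blk P v"
proof
  assume "blk (restrict_partition P W) u = blk (restrict_partition P W) v"
  then have "u \<in> blk P v"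
    using blk_restrict_partition[OF assms(1,2)] blk_in_partition[OF assms(1)] assms by blast
  then show "blk P u = blk P v"
    using blk_eqI[OF assms(1)] blk_in_partition[OF assms(1)] assms by blast
qed (use blk_restrict_partition[OF assms(1,2)] assms in simp)

section \<open>Paths and cycles\<close>

lemma adj_rtrancl_sym:
  assumes "(u, v) \<in> (adj A s t)\<^sup>*"
  shows "(v, u) \<in> (adj A s t)\<^sup>*"
proof -
  have "sym (adj A s t)" unfolding adj_def sym_def by blast
  then show ?thesis using assms sym_rtrancl by (metis symD)
qed

lemma adj_rtrancl_image:
  assumes "(u, v) \<in> (adj A s t)\<^sup>*"
  shows "(h u, h v) \<in> (adj A (h \<circ> s) (h \<circ> t))\<^sup>*"
  using assms
proof (induction rule: rtrancl_induct)
  case (step y z)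
  have "(h y, h z) \<in> adj A (h \<circ> s) (h \<circ> t)"
    using step(2) unfolding adj_def by force
  with step(3) show ?case by (rule rtrancl_into_rtrancl)
qed simp

definition simple_path ::
    "'e set \<Rightarrow> ('e \<Rightarrow> 'v) \<Rightarrow> ('e \<Rightarrow> 'v) \<Rightarrow> 'v \<Rightarrow> 'v \<Rightarrow> 'v list \<Rightarrow> 'e list \<Rightarrow> bool" where
  "simple_path A s t u v vs es \<longleftrightarrow>
     length vs = Suc (length es) \<and> vs!0 = u \<and> vs!(length es) = v \<and> distinct vs \<and> set es \<subseteq> A \<and>
     (\<forall>i<length es. {s (es!i), t (es!i)} = {vs!i, vs!Suc i})"

lemma simple_path_prefix:
  assumes "simple_path A s t u v vs es" "j < length vs"
  shows "simple_path A s t u (vs!j) (take (Suc j) vs) (take j es)"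
  using assms unfolding simple_path_def by (auto dest: in_set_takeD)

lemma simple_path_snoc:
  assumes "simple_path A s t u v vs es" "d \<in> A" "{s d, t d} = {v, w}" "w \<notin> set vs"
  shows "simple_path A s t u w (vs @ [w]) (es @ [d])"
  unfolding simple_path_def
proof (intro conjI allI impI)
  fix i assume "i < length (es @ [d])"
  then consider "i < length es" | "i = length es" by fastforce
  then show "{s ((es @ [d]) ! i), t ((es @ [d]) ! i)} = {(vs @ [w]) ! i, (vs @ [w]) ! Suc i}"
    by cases (use assms in \<open>auto simp: simple_path_def nth_append\<close>)
qed (use assms in \<open>auto simp: simple_path_def nth_append\<close>)

lemma adj_rtrancl_imp_simple_path:
  assumes "(u, v) \<in> (adj A s t)\<^sup>*"
  shows "\<exists>vs es. simple_path A s t u v vs es"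
  using assms
proof (induction rule: rtrancl_induct)
  case base
  have "simple_path A s t u u [u] []" unfolding simple_path_def by simp
  then show ?case by blast
next
  case (step v w)
  obtain vs es where p: "simple_path A s t u v vs es" using step(3) by blast
  obtain d where "d \<in> A" "{s d, t d} = {v, w}" using step(2) unfolding adj_def by blast
  show ?case
  proof (cases "w \<in> set vs")
    case True
    then obtain j where "j < length vs" "vs!j = w" by (metis in_set_conv_nth)
    then show ?thesis using simple_path_prefix[OF p] by metis
  next
    case False
    then show ?thesis using simple_path_snoc[OF p \<open>d \<in> A\<close> \<open>{s d, t d} = {v, w}\<close>] by blast
  qed
qed

lemma simple_path_distinct_edges:
  assumes "simple_path A s t u v vs es"
  shows "distinct es"
proof -
  have "es!i \<noteq> es!j" if "i < j" "j < length es" for i j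
  proof
    assume "es!i = es!j"
    then have "{vs!i, vs!Suc i} = {vs!j, vs!Suc j}"
      using assms that unfolding simple_path_def by (metis less_trans)
    then have "vs!i = vs!j \<or> vs!i = vs!Suc j" by blast
    moreover have "distinct vs" "length vs = Suc (length es)"
      using assms unfolding simple_path_def by auto
    ultimately show False using that by (simp add: nth_eq_iff_index_eq)
  qed
  then show ?thesis unfolding distinct_conv_nth by (metis linorder_neqE_nat)
qed

lemma simple_cycle_close_path:
  assumes "simple_path (A - {e}) s t (t e) (s e) vs es" "e \<in> A"
  shows "simple_cycle A s t (set (es @ [e]))"
  unfolding simple_cycle_def
proof (intro exI[of _ vs] exI[of _ "es @ [e]"] conjI allI impI)
  fix i assume "i < length (es @ [e])"
  then consider "i < length es" | "i = length es" by fastforce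
  then show "{s ((es @ [e]) ! i), t ((es @ [e]) ! i)} = {vs ! i, vs ! ((i + 1) mod length (es @ [e]))}"
    by cases (use assms in \<open>auto simp: simple_path_def nth_append\<close>)
next
  show "distinct (es @ [e])"
    using assms simple_path_distinct_edges[OF assms(1)] unfolding simple_path_def by auto
qed (use assms in \<open>auto simp: simple_path_def\<close>)

lemma non_cut_edge_in_simple_cycle:
  assumes "e \<in> A" "\<not> cut_edge A s t e"
  shows "\<exists>C. simple_cycle A s t C \<and> e \<in> C"
proof -
  have "(s e, t e) \<in> (adj (A - {e}) s t)\<^sup>*"
    using assms unfolding cut_edge_def by blast
  then have "(t e, s e) \<in> (adj (A - {e}) s t)\<^sup>*" by (rule adj_rtrancl_sym)
  then obtain vs es where "simple_path (A - {e}) s t (t e) (s e) vs es"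
    by (blast dest: adj_rtrancl_imp_simple_path)
  then show ?thesis using simple_cycle_close_path assms(1) by fastforce
qed

lemma cut_edge_of_image:
  assumes "cut_edge A (h \<circ> s) (h \<circ> t) e"
  shows "cut_edge A s t e"
  using assms adj_rtrancl_image[of "s e" "t e" "A - {e}" s t h]
  unfolding cut_edge_def by auto

lemma connected_mg_image:
  assumes "connected_mg W F s t"
  shows "connected_mg (h ` W) F (h \<circ> s) (h \<circ> t)"
  using assms adj_rtrancl_image[of _ _ F s t h] unfolding connected_mg_def by blast

lemma two_edge_connected_image_edge_in_simple_cycle:
  assumes "two_edge_connected W F s t" "e \<in> F"
  shows "\<exists>C. simple_cycle F (h \<circ> s) (h \<circ> t) C \<and> e \<in> C"
proof (rule non_cut_edge_in_simple_cycle[OF assms(2)])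
  show "\<not> cut_edge F (h \<circ> s) (h \<circ> t) e"
    using assms cut_edge_of_image unfolding two_edge_connected_def by metis
qed

lemma simple_cycle_subset:
  assumes "simple_cycle A s t C"
  shows "C \<subseteq> A"
  using assms unfolding simple_cycle_def by blast

lemma simple_cycle_image:
  assumes "simple_cycle F s t C" "F \<subseteq> E"
    and "\<forall>e\<in>F. s' e = h (s e) \<and> t' e = h (t e)"
    and "inj_on h (s ` F \<union> t ` F)"
  shows "simple_cycle E s' t' C"
proof -
  obtain vs es where c: "es \<noteq> []" "length vs = length es" "distinct vs" "distinct es"
    "set es \<subseteq> F" "set es = C"
    "\<forall>i < length es. {s (es!i), t (es!i)} = {vs!i, vs!((i+1) mod length es)}"
    using assms(1) unfolding simple_cycle_def by blast
  have "set vs \<subseteq> s ` F \<union> t ` F"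
  proof
    fix x assume "x \<in> set vs"
    then obtain i where i: "i < length vs" "vs!i = x" by (metis in_set_conv_nth)
    then have "es!i \<in> F" "x \<in> {s (es!i), t (es!i)}" using c by auto
    then show "x \<in> s ` F \<union> t ` F" by auto
  qed
  then have "distinct (map h vs)"
    using c assms(4) by (simp add: distinct_map inj_on_subset)
  have "set es \<subseteq> E" using c assms(2) by blast
  show ?thesis unfolding simple_cycle_def
  proof (intro exI[of _ "map h vs"] exI[of _ es] conjI allI impI)
    fix i assume i: "i < length es"
    then have "es!i \<in> F" using c by auto
    then have "{s' (es!i), t' (es!i)} = h ` {s (es!i), t (es!i)}" using assms(3) by auto
    also have "\<dots> = {map h vs ! i, map h vs ! ((i+1) mod length es)}"
      using c i by auto
    finally show "{s' (es!i), t' (es!i)} = {map h vs ! i, map h vs ! ((i+1) mod length es)}" .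
  qed (use c \<open>distinct (map h vs)\<close> \<open>set es \<subseteq> E\<close> in auto)
qed

lemma directed_cycle_preimage:
  assumes "directed_cycle E s' t' C" "C \<subseteq> F"
    and "\<forall>e\<in>F. s' e = h (s e) \<and> t' e = h (t e)"
    and "inj_on h (s ` F \<union> t ` F)"
  shows "directed_cycle F s t C"
proof -
  obtain vs es where c: "es \<noteq> []" "length vs = length es" "distinct vs" "distinct es"
    "set es = C" "\<forall>i < length es. s' (es!i) = vs!i \<and> t' (es!i) = vs!((i+1) mod length es)"
    using assms(1) unfolding directed_cycle_def by blast
  have inF: "es!i \<in> F" if "i < length es" for i using c assms(2) that by auto
  have "vs = map h (map s es)"
    by (rule nth_equalityI) (use c inF assms(3) in auto)
  show ?thesis unfolding directed_cycle_def
  proof (intro exI[of _ "map s es"] exI[of _ es] conjI allI impI)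
    show "distinct (map s es)" using c \<open>vs = map h (map s es)\<close> by (metis distinct_map)
    fix i assume i: "i < length es"
    let ?j = "(i+1) mod length es"
    have j: "?j < length es" using c by simp
    have "h (t (es!i)) = t' (es!i)" using inF[OF i] assms(3) by auto
    also have "\<dots> = s' (es!?j)" using c i j by auto
    also have "\<dots> = h (s (es!?j))" using inF[OF j] assms(3) by auto
    finally have "h (t (es!i)) = h (s (es!?j))" .
    then have "t (es!i) = s (es!?j)"
      using inF[OF i] inF[OF j] assms(4) by (auto dest: inj_onD)
    then show "t (es ! i) = map s es ! ?j" using j by simp
  qed (use c assms(2) in auto)
qed

section \<open>Sub-quotients of cacti\<close>

lemma same_fibres_factor:
  assumes "\<forall>u\<in>W. \<forall>v\<in>W. g u = g v \<longleftrightarrow> f u = f v"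
  obtains h where "\<And>w. w \<in> W \<Longrightarrow> f w = h (g w)" "inj_on h (g ` W)"
proof
  let ?h = "f \<circ> inv_into W g"
  show "f w = ?h (g w)" if "w \<in> W" for w
    using assms that inv_into_into[of "g w" g W] f_inv_into_f[of "g w" g W] by auto
  then show "inj_on ?h (g ` W)"
    using assms by (auto intro!: inj_onI)
qed

lemma subquotient_factor:
  assumes "\<forall>e\<in>F. src e \<in> W \<and> tgt e \<in> W"
    and "\<forall>u\<in>W. \<forall>v\<in>W. g u = g v \<longleftrightarrow> f u = f v"
  obtains h where "\<forall>e\<in>F. (f \<circ> src) e = h ((g \<circ> src) e) \<and> (f \<circ> tgt) e = h ((g \<circ> tgt) e)"
    and "inj_on h ((g \<circ> src) ` F \<union> (g \<circ> tgt) ` F)"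
proof -
  obtain h where h: "\<And>w. w \<in> W \<Longrightarrow> f w = h (g w)" "inj_on h (g ` W)"
    using same_fibres_factor[OF assms(2)] by blast
  have "(g \<circ> src) ` F \<union> (g \<circ> tgt) ` F \<subseteq> g ` W" using assms(1) by auto
  then have "inj_on h ((g \<circ> src) ` F \<union> (g \<circ> tgt) ` F)"
    by (rule inj_on_subset[OF h(2)])
  moreover have "\<forall>e\<in>F. (f \<circ> src) e = h ((g \<circ> src) e) \<and> (f \<circ> tgt) e = h ((g \<circ> tgt) e)"
    using assms(1) h(1) by simp
  ultimately show ?thesis using that by blast
qed

lemma simple_cycle_subquotient:
  assumes "F \<subseteq> E" "\<forall>e\<in>F. src e \<in> W \<and> tgt e \<in> W"
    and "\<forall>u\<in>W. \<forall>v\<in>W. g u = g v \<longleftrightarrow> f u = f v"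
    and "simple_cycle F (g \<circ> src) (g \<circ> tgt) C"
  shows "simple_cycle E (f \<circ> src) (f \<circ> tgt) C"
  by (rule subquotient_factor[OF assms(2,3)])
    (rule simple_cycle_image[OF assms(4,1)])

lemma directed_cycle_subquotient:
  assumes "\<forall>e\<in>F. src e \<in> W \<and> tgt e \<in> W"
    and "\<forall>u\<in>W. \<forall>v\<in>W. g u = g v \<longleftrightarrow> f u = f v"
    and "directed_cycle E (f \<circ> src) (f \<circ> tgt) C" "C \<subseteq> F"
  shows "directed_cycle F (g \<circ> src) (g \<circ> tgt) C"
  by (rule subquotient_factor[OF assms(1,2)])
    (rule directed_cycle_preimage[OF assms(3,4)])

lemma cactus_of_cycle_embedding:
  assumes "cactus V' E s' t'" "connected_mg V F s t" "F \<subseteq> E"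
    and "\<And>e. e \<in> F \<Longrightarrow> \<exists>C. simple_cycle F s t C \<and> e \<in> C"
    and "\<And>C. simple_cycle F s t C \<Longrightarrow> simple_cycle E s' t' C"
  shows "cactus V F s t"
  unfolding cactus_def
proof (intro conjI ballI assms(2))
  fix e assume "e \<in> F"
  then have "\<exists>!C. simple_cycle E s' t' C \<and> e \<in> C"
    using assms(1,3) unfolding cactus_def by blast
  then show "\<exists>!C. simple_cycle F s t C \<and> e \<in> C"
    using assms(4)[OF \<open>e \<in> F\<close>] assms(5) by blast
qed

lemma oriented_cactus_of_cycle_embedding:
  assumes "oriented_cactus V' E s' t'" "cactus V F s t"
    and "\<And>C. simple_cycle F s t C \<Longrightarrow> simple_cycle E s' t' C"
    and "\<And>C. C \<subseteq> F \<Longrightarrow> directed_cycle E s' t' C \<Longrightarrow> directed_cycle F s t C"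
  shows "oriented_cactus V F s t"
  unfolding oriented_cactus_def
proof (intro conjI allI impI assms(2))
  fix C assume "simple_cycle F s t C"
  then show "directed_cycle F s t C"
    using assms(1,3,4) simple_cycle_subset unfolding oriented_cactus_def by blast
qed

lemma cactus_subquotient:
  assumes "cactus V' E (f \<circ> src) (f \<circ> tgt)" "two_edge_connected W F src tgt"
    and "F \<subseteq> E" "\<forall>e\<in>F. src e \<in> W \<and> tgt e \<in> W"
    and "\<forall>u\<in>W. \<forall>v\<in>W. g u = g v \<longleftrightarrow> f u = f v"
  shows "cactus (g ` W) F (g \<circ> src) (g \<circ> tgt)"
proof (rule cactus_of_cycle_embedding[OF assms(1) _ assms(3)])
  show "connected_mg (g ` W) F (g \<circ> src) (g \<circ> tgt)"
    using assms(2) connected_mg_image unfolding two_edge_connected_def by blast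
  show "\<exists>C. simple_cycle F (g \<circ> src) (g \<circ> tgt) C \<and> e \<in> C" if "e \<in> F" for e
    using two_edge_connected_image_edge_in_simple_cycle[OF assms(2) that] .
  show "simple_cycle E (f \<circ> src) (f \<circ> tgt) C"
    if "simple_cycle F (g \<circ> src) (g \<circ> tgt) C" for C
    using simple_cycle_subquotient[OF assms(3-5) that] .
qed

lemma oriented_cactus_subquotient:
  assumes "oriented_cactus V' E (f \<circ> src) (f \<circ> tgt)" "two_edge_connected W F src tgt"
    and "F \<subseteq> E" "\<forall>e\<in>F. src e \<in> W \<and> tgt e \<in> W"
    and "\<forall>u\<in>W. \<forall>v\<in>W. g u = g v \<longleftrightarrow> f u = f v"
  shows "oriented_cactus (g ` W) F (g \<circ> src) (g \<circ> tgt)"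
proof (rule oriented_cactus_of_cycle_embedding[OF assms(1)])
  show "cactus (g ` W) F (g \<circ> src) (g \<circ> tgt)"
    using assms(1) cactus_subquotient[OF _ assms(2-5)] unfolding oriented_cactus_def by blast
  show "simple_cycle E (f \<circ> src) (f \<circ> tgt) C"
    if "simple_cycle F (g \<circ> src) (g \<circ> tgt) C" for C
    using simple_cycle_subquotient[OF assms(3-5) that] .
  show "directed_cycle F (g \<circ> src) (g \<circ> tgt) C"
    if "C \<subseteq> F" "directed_cycle E (f \<circ> src) (f \<circ> tgt) C" for C
    using directed_cycle_subquotient[OF assms(4,5) that(2,1)] .
qed

theorem corollary2p15:
  fixes V W :: "'v set" and E F :: "'e set" and src tgt :: "'e \<Rightarrow> 'v" and P :: "'v set set"
  assumes "multigraph V E src tgt"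
    and "subgraph W F V E src tgt"
    and "two_edge_connected W F src tgt"
    and "partition_on V P"
  shows "(cactus P E (blk P \<circ> src) (blk P \<circ> tgt) \<longrightarrow>
            cactus (restrict_partition P W) F
              (blk (restrict_partition P W) \<circ> src) (blk (restrict_partition P W) \<circ> tgt))
       \<and> (oriented_cactus P E (blk P \<circ> src) (blk P \<circ> tgt) \<longrightarrow>
            oriented_cactus (restrict_partition P W) F
              (blk (restrict_partition P W) \<circ> src) (blk (restrict_partition P W) \<circ> tgt))"
proof -
  let ?Q = "restrict_partition P W"
  have WV: "W \<subseteq> V" and FE: "F \<subseteq> E" and FW: "\<forall>e\<in>F. src e \<in> W \<and> tgt e \<in> W"
    using assms(2) unfolding subgraph_def by auto
  have blocks: "blk ?Q ` W = ?Q"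
    using blk_image partition_on_restrict_partition[OF assms(4) WV] by blast
  have fibres: "\<forall>u\<in>W. \<forall>v\<in>W. blk ?Q u = blk ?Q v \<longleftrightarrow> blk P u = blk P v"
    using blk_restrict_partition_eq_iff[OF assms(4) WV] by blast
  show ?thesis
    using cactus_subquotient[OF _ assms(3) FE FW fibres]
      oriented_cactus_subquotient[OF _ assms(3) FE FW fibres]
    unfolding blocks by blast
qed

end
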